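(* Let $S$ be a closed connected oriented surface of genus $n\ge2$ and let $\chi\in H^1(S,\mathbb C)$ satisfy $\chi(H_1(S,\mathbb Z))=\mathbb Z+i\mathbb Z$ and $\omega(\chi)>0$. Then there is a symplectic basis $x_1,y_1,\dots,x_n,y_n$ of $H_1(S,\mathbb Z)$ such that $\mathrm{Im}(\overline{\chi(x_1)}\chi(y_1))>0$ and, for every $j=2,\dots,n$, $\chi(y_j)=0$ and $\chi(x_j)$ is a real number $\ge 0$.
   Context: A symplectic basis of $H_1(S,\mathbb Z)$ is a basis with intersection numbers $x_i\cdot y_j=\delta_{ij}$, $x_i\cdot x_j=y_i\cdot y_j=0$. $\omega(\chi):=\sum_{j=1}^n\mathrm{Im}(\overline{\chi(x_j)}\chi(y_j))$ for any symplectic basis (independent of the choice). *)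

theory Defs
  imports Complex_Main
begin

text \<open>Model of H_1(S,Z) for a closed connected oriented surface S of genus n:
  the lattice Z^(2n), realised as integer vectors nat => int supported on {0..<2n},
  with the standard intersection (symplectic) form; coordinates i and n+i form
  the standard symplectic pair (a_i, b_i), i < n.\<close>

definition H1 :: "nat \<Rightarrow> (nat \<Rightarrow> int) set" where
  "H1 n = {v. \<forall>k\<ge>2*n. v k = 0}"

definition inter :: "nat \<Rightarrow> (nat \<Rightarrow> int) \<Rightarrow> (nat \<Rightarrow> int) \<Rightarrow> int" where
  "inter n v w = (\<Sum>i<n. v i * w (n+i) - v (n+i) * w i)"

text \<open>A class chi in H^1(S,C) = Hom(H_1(S,Z),C), given by its values c k on the
  standard basis vectors.\<close>

definition chi :: "(nat \<Rightarrow> complex) \<Rightarrow> nat \<Rightarrow> (nat \<Rightarrow> int) \<Rightarrow> complex" where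
  "chi c n v = (\<Sum>k<2*n. of_int (v k) * c k)"

definition comb :: "nat \<Rightarrow> (nat \<Rightarrow> nat \<Rightarrow> int) \<Rightarrow> (nat \<Rightarrow> nat \<Rightarrow> int)
                     \<Rightarrow> (nat \<Rightarrow> int) \<Rightarrow> (nat \<Rightarrow> int) \<Rightarrow> (nat \<Rightarrow> int)" where
  "comb n x y a b = (\<lambda>k. \<Sum>j\<in>{1..n}. a j * x j k + b j * y j k)"

definition symplectic_basis :: "nat \<Rightarrow> (nat \<Rightarrow> nat \<Rightarrow> int) \<Rightarrow> (nat \<Rightarrow> nat \<Rightarrow> int) \<Rightarrow> bool" where
  "symplectic_basis n x y \<longleftrightarrow>
     (\<forall>j\<in>{1..n}. x j \<in> H1 n \<and> y j \<in> H1 n) \<and>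
     (\<forall>v\<in>H1 n. \<exists>a b. v = comb n x y a b) \<and>
     (\<forall>a b. comb n x y a b = (\<lambda>_. 0) \<longrightarrow> (\<forall>j\<in>{1..n}. a j = 0 \<and> b j = 0)) \<and>
     (\<forall>i\<in>{1..n}. \<forall>j\<in>{1..n}.
        inter n (x i) (y j) = (if i = j then 1 else 0) \<and>
        inter n (x i) (x j) = 0 \<and> inter n (y i) (y j) = 0)"

text \<open>omega(chi), computed in the standard symplectic basis (a_i, b_i) = (e_i, e_(n+i));
  it is independent of the symplectic basis chosen.\<close>

definition omega :: "(nat \<Rightarrow> complex) \<Rightarrow> nat \<Rightarrow> real" where
  "omega c n = (\<Sum>i<n. Im (cnj (c i) * c (n+i)))"

definition gauss_ints :: "complex set" where
  "gauss_ints = {of_int a + \<i> * of_int b | a b. True}"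

end

theory Submission
  imports Defs
begin

text \<open>Write \<open>\<chi> = \<alpha> + i \<beta>\<close> with integer-valued linear forms \<open>\<alpha>, \<beta>\<close> on \<open>H\<^sub>1\<close>. The
  elementary symplectic moves \<open>x\<^sub>j += k y\<^sub>j\<close>, \<open>y\<^sub>j += k x\<^sub>j\<close> and the pair
  \<open>x\<^sub>i += k x\<^sub>l, y\<^sub>l -= k y\<^sub>i\<close> change the values of a linear form on two basis vectors like the
  steps of the Euclidean algorithm. They therefore make \<open>\<beta>\<close> vanish on \<open>y\<^sub>1\<close> and on the
  handles \<open>2..n\<close>, and afterwards make \<open>\<alpha>(y\<^sub>j) = 0\<close>, \<open>\<alpha>(x\<^sub>j) \<ge> 0\<close> on these handles
  without disturbing \<open>\<beta>\<close>. All moves preserve \<open>\<Sum>\<^sub>j Im(conj \<chi>(x\<^sub>j) \<chi>(y\<^sub>j))\<close>, which equals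
  \<open>\<omega>(\<chi>)\<close> in the standard basis; in the final basis only the first summand survives,
  so it equals \<open>\<omega>(\<chi>) > 0\<close>.\<close>

definition add_scaled :: "(nat \<Rightarrow> int) \<Rightarrow> int \<Rightarrow> (nat \<Rightarrow> int) \<Rightarrow> (nat \<Rightarrow> int)" where
  "add_scaled v k w = (\<lambda>t. v t + k * w t)"

definition int_linear :: "((nat \<Rightarrow> int) \<Rightarrow> int) \<Rightarrow> bool" where
  "int_linear L \<longleftrightarrow> (\<forall>v k w. L (add_scaled v k w) = L v + k * L w)"

lemma int_linear_add_scaled: "int_linear L \<Longrightarrow> L (add_scaled v k w) = L v + k * L w"
  by (simp add: int_linear_def)

lemma int_linear_sum: "int_linear (\<lambda>v. \<Sum>t<N. v t * p t)"
  unfolding int_linear_def add_scaled_def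
  by (simp add: sum.distrib sum_distrib_left algebra_simps)

lemma add_scaled_cancel: "add_scaled (add_scaled v k w) (- k) w = v"
  by (simp add: add_scaled_def)

lemma add_scaled_in_H1: "v \<in> H1 n \<Longrightarrow> w \<in> H1 n \<Longrightarrow> add_scaled v k w \<in> H1 n"
  by (simp add: H1_def add_scaled_def)

lemma chi_add_scaled: "chi c n (add_scaled v k w) = chi c n v + of_int k * chi c n w"
  by (simp add: chi_def add_scaled_def sum.distrib sum_distrib_left algebra_simps)

lemma inter_add_scaled_left: "inter n (add_scaled v k w) z = inter n v z + k * inter n w z"
  by (simp add: inter_def add_scaled_def sum_distrib_left algebra_simps sum.distrib sum_subtractf)

lemma inter_add_scaled_right: "inter n z (add_scaled v k w) = inter n z v + k * inter n z w"
  by (simp add: inter_def add_scaled_def sum_distrib_left algebra_simps sum.distrib sum_subtractf)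

lemma inter_antisym: "inter n v w = - inter n w v"
  by (simp add: inter_def sum_negf[symmetric] algebra_simps)

lemma inter_zero_left [simp]: "inter n (\<lambda>_. 0) z = 0"
  by (simp add: inter_def)

lemma inter_comb_left:
  "inter n (comb n x y a b) z = (\<Sum>j\<in>{1..n}. a j * inter n (x j) z + b j * inter n (y j) z)"
proof -
  have "inter n (comb n x y a b) z =
     (\<Sum>i<n. \<Sum>j\<in>{1..n}. a j * (x j i * z (n+i) - x j (n+i) * z i) + b j * (y j i * z (n+i) - y j (n+i) * z i))"
    unfolding inter_def comb_def sum_distrib_right sum_subtractf[symmetric]
    by (intro sum.cong) (simp_all add: algebra_simps)
  also have "\<dots> = (\<Sum>j\<in>{1..n}. \<Sum>i<n. a j * (x j i * z (n+i) - x j (n+i) * z i) + b j * (y j i * z (n+i) - y j (n+i) * z i))"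
    by (rule sum.swap)
  also have "\<dots> = (\<Sum>j\<in>{1..n}. a j * inter n (x j) z + b j * inter n (y j) z)"
    unfolding inter_def by (simp add: sum.distrib sum_distrib_left)
  finally show ?thesis .
qed

definition in_span :: "nat \<Rightarrow> (nat \<Rightarrow> nat \<Rightarrow> int) \<Rightarrow> (nat \<Rightarrow> nat \<Rightarrow> int) \<Rightarrow> (nat \<Rightarrow> int) \<Rightarrow> bool" where
  "in_span n x y v \<longleftrightarrow> (\<exists>a b. v = comb n x y a b)"

lemma comb_comb:
  assumes "\<forall>j\<in>{1..n}. x j = comb n x' y' (A j) (B j) \<and> y j = comb n x' y' (C j) (D j)"
  shows "comb n x y a b = comb n x' y' (\<lambda>m. \<Sum>j\<in>{1..n}. a j * A j m + b j * C j m)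
                                        (\<lambda>m. \<Sum>j\<in>{1..n}. a j * B j m + b j * D j m)"
proof
  fix t
  have "comb n x y a b t =
      (\<Sum>j\<in>{1..n}. \<Sum>m\<in>{1..n}. (a j * A j m + b j * C j m) * x' m t + (a j * B j m + b j * D j m) * y' m t)"
    unfolding comb_def using assms
    by (intro sum.cong) (auto simp: comb_def sum_distrib_left sum.distrib[symmetric] algebra_simps)
  also have "\<dots> = (\<Sum>m\<in>{1..n}. \<Sum>j\<in>{1..n}. (a j * A j m + b j * C j m) * x' m t + (a j * B j m + b j * D j m) * y' m t)"
    by (rule sum.swap)
  finally show "comb n x y a b t = comb n x' y' (\<lambda>m. \<Sum>j\<in>{1..n}. a j * A j m + b j * C j m)
                                        (\<lambda>m. \<Sum>j\<in>{1..n}. a j * B j m + b j * D j m) t"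
    unfolding comb_def by (simp add: sum.distrib sum_distrib_right distrib_right)
qed

lemma Collect_eq_conj [simp]: "{x. x = j \<and> P x} = (if P j then {j} else {})"
  by auto

lemma in_span_basis:
  assumes "j \<in> {1..n}"
  shows "in_span n x y (x j)" and "in_span n x y (y j)"
proof -
  have "x j = comb n x y (\<lambda>m. of_bool (m = j)) (\<lambda>m. 0)" and "y j = comb n x y (\<lambda>m. 0) (\<lambda>m. of_bool (m = j))"
    unfolding comb_def using assms by (auto simp: Int_def)
  then show "in_span n x y (x j)" "in_span n x y (y j)"
    unfolding in_span_def by blast+
qed

lemma in_span_add_scaled:
  assumes "in_span n x y v" "in_span n x y w"
  shows "in_span n x y (add_scaled v k w)"
proof -
  obtain a b a' b' where "v = comb n x y a b" "w = comb n x y a' b'"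
    using assms unfolding in_span_def by blast
  then have "add_scaled v k w = comb n x y (\<lambda>m. a m + k * a' m) (\<lambda>m. b m + k * b' m)"
    unfolding add_scaled_def comb_def by (auto simp: sum.distrib sum_distrib_left algebra_simps)
  then show ?thesis unfolding in_span_def by blast
qed

definition symplectic_relations :: "nat \<Rightarrow> (nat \<Rightarrow> nat \<Rightarrow> int) \<Rightarrow> (nat \<Rightarrow> nat \<Rightarrow> int) \<Rightarrow> bool" where
  "symplectic_relations n x y \<longleftrightarrow> (\<forall>i\<in>{1..n}. \<forall>j\<in>{1..n}.
        inter n (x i) (y j) = (if i = j then 1 else 0) \<and>
        inter n (x i) (x j) = 0 \<and> inter n (y i) (y j) = 0)"

lemma symplectic_relations_inter:
  assumes "symplectic_relations n x y" "i \<in> {1..n}" "j \<in> {1..n}"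
  shows "inter n (x i) (y j) = (if i = j then 1 else 0)"
    and "inter n (y j) (x i) = (if i = j then -1 else 0)"
    and "inter n (x i) (x j) = 0"
    and "inter n (y i) (y j) = 0"
  using assms unfolding symplectic_relations_def by (auto simp: inter_antisym[of n "y j" "x i"])

lemma symplectic_relations_imp_independent:
  assumes r: "symplectic_relations n x y" and zero: "comb n x y a b = (\<lambda>_. 0)" and j: "j \<in> {1..n}"
  shows "a j = 0 \<and> b j = 0"
proof
  have "0 = inter n (comb n x y a b) (y j)" using zero by simp
  also have "\<dots> = (\<Sum>i\<in>{1..n}. a i * of_bool (i = j))"
    unfolding inter_comb_left using r j by (intro sum.cong) (auto simp: symplectic_relations_inter)
  finally show "a j = 0" using j by (simp add: Int_def)
  have "0 = inter n (comb n x y a b) (x j)" using zero by simp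
  also have "\<dots> = - (\<Sum>i\<in>{1..n}. b i * of_bool (i = j))"
    unfolding inter_comb_left sum_negf[symmetric] using r j
    by (intro sum.cong) (auto simp: symplectic_relations_inter)
  finally show "b j = 0" using j by (simp add: Int_def)
qed

lemma symplectic_basis_imp_relations: "symplectic_basis n x y \<Longrightarrow> symplectic_relations n x y"
  unfolding symplectic_basis_def symplectic_relations_def by blast

lemma symplectic_basis_in_H1: "symplectic_basis n x y \<Longrightarrow> j \<in> {1..n} \<Longrightarrow> x j \<in> H1 n \<and> y j \<in> H1 n"
  unfolding symplectic_basis_def by blast

lemma symplectic_basis_if_spans_basis:
  assumes sb: "symplectic_basis n x y"
    and H1: "\<forall>j\<in>{1..n}. x' j \<in> H1 n \<and> y' j \<in> H1 n"
    and span: "\<forall>j\<in>{1..n}. in_span n x' y' (x j) \<and> in_span n x' y' (y j)"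
    and r: "symplectic_relations n x' y'"
  shows "symplectic_basis n x' y'"
proof -
  have "\<forall>j\<in>{1..n}. \<exists>p. x j = comb n x' y' (fst p) (snd p)"
    and "\<forall>j\<in>{1..n}. \<exists>p. y j = comb n x' y' (fst p) (snd p)"
    using span unfolding in_span_def by auto
  then obtain P Q where P: "\<forall>j\<in>{1..n}. x j = comb n x' y' (fst (P j)) (snd (P j))"
    and Q: "\<forall>j\<in>{1..n}. y j = comb n x' y' (fst (Q j)) (snd (Q j))"
    by (metis bchoice)
  have "\<exists>a b. v = comb n x' y' a b" if "v \<in> H1 n" for v
  proof -
    obtain a b where "v = comb n x y a b" using sb \<open>v \<in> H1 n\<close> unfolding symplectic_basis_def by blast
    with comb_comb[of n x x' y' "\<lambda>j. fst (P j)" "\<lambda>j. snd (P j)" y "\<lambda>j. fst (Q j)" "\<lambda>j. snd (Q j)"] P Q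
    show ?thesis by blast
  qed
  then show ?thesis unfolding symplectic_basis_def
    using H1 symplectic_relations_imp_independent[OF r] r unfolding symplectic_relations_def by blast
qed

lemma symplectic_basis_shear_x:
  assumes sb: "symplectic_basis n x y" and j0: "j0 \<in> {1..n}"
  shows "symplectic_basis n (x(j0 := add_scaled (x j0) k (y j0))) y"
proof (rule symplectic_basis_if_spans_basis[OF sb])
  let ?x = "x(j0 := add_scaled (x j0) k (y j0))"
  show "\<forall>j\<in>{1..n}. ?x j \<in> H1 n \<and> y j \<in> H1 n"
    using symplectic_basis_in_H1[OF sb] j0 add_scaled_in_H1 by auto
  have "in_span n ?x y (x j0)"
    using in_span_add_scaled[OF in_span_basis[OF j0], of ?x y "- k"] by (simp add: add_scaled_cancel)
  moreover have "in_span n ?x y (?x j)" "in_span n ?x y (y j)" if "j \<in> {1..n}" for j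
    using in_span_basis[OF that] by blast+
  ultimately show "\<forall>j\<in>{1..n}. in_span n ?x y (x j) \<and> in_span n ?x y (y j)"
    by (metis fun_upd_other)
  show "symplectic_relations n ?x y"
    unfolding symplectic_relations_def using symplectic_basis_imp_relations[OF sb] j0
    by (auto simp: inter_add_scaled_left inter_add_scaled_right symplectic_relations_inter)
qed

lemma symplectic_basis_shear_y:
  assumes sb: "symplectic_basis n x y" and j0: "j0 \<in> {1..n}"
  shows "symplectic_basis n x (y(j0 := add_scaled (y j0) k (x j0)))"
proof (rule symplectic_basis_if_spans_basis[OF sb])
  let ?y = "y(j0 := add_scaled (y j0) k (x j0))"
  show "\<forall>j\<in>{1..n}. x j \<in> H1 n \<and> ?y j \<in> H1 n"
    using symplectic_basis_in_H1[OF sb] j0 add_scaled_in_H1 by auto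
  have "in_span n x ?y (y j0)"
    using in_span_add_scaled[OF in_span_basis(2,1)[OF j0], of x ?y "- k"] by (simp add: add_scaled_cancel)
  moreover have "in_span n x ?y (x j)" "in_span n x ?y (?y j)" if "j \<in> {1..n}" for j
    using in_span_basis[OF that] by blast+
  ultimately show "\<forall>j\<in>{1..n}. in_span n x ?y (x j) \<and> in_span n x ?y (y j)"
    by (metis fun_upd_other)
  show "symplectic_relations n x ?y"
    unfolding symplectic_relations_def using symplectic_basis_imp_relations[OF sb] j0
    by (auto simp: inter_add_scaled_left inter_add_scaled_right symplectic_relations_inter)
qed

lemma symplectic_basis_cross:
  assumes sb: "symplectic_basis n x y" and i0: "i0 \<in> {1..n}" and l0: "l0 \<in> {1..n}" and "i0 \<noteq> l0"
  shows "symplectic_basis n (x(i0 := add_scaled (x i0) k (x l0))) (y(l0 := add_scaled (y l0) (- k) (y i0)))"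
proof (rule symplectic_basis_if_spans_basis[OF sb])
  let ?x = "x(i0 := add_scaled (x i0) k (x l0))"
  let ?y = "y(l0 := add_scaled (y l0) (- k) (y i0))"
  show "\<forall>j\<in>{1..n}. ?x j \<in> H1 n \<and> ?y j \<in> H1 n"
    using symplectic_basis_in_H1[OF sb] i0 l0 add_scaled_in_H1 by auto
  have "in_span n ?x ?y (x i0)"
    using in_span_add_scaled[OF in_span_basis(1)[OF i0] in_span_basis(1)[OF l0], of ?x ?y "- k"] \<open>i0 \<noteq> l0\<close>
    by (simp add: add_scaled_cancel)
  moreover have "in_span n ?x ?y (y l0)"
    using in_span_add_scaled[OF in_span_basis(2)[OF l0] in_span_basis(2)[OF i0], of ?x ?y k] \<open>i0 \<noteq> l0\<close>
    by (simp add: add_scaled_def)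
  moreover have "in_span n ?x ?y (?x j)" "in_span n ?x ?y (?y j)" if "j \<in> {1..n}" for j
    using in_span_basis[OF that] by blast+
  ultimately show "\<forall>j\<in>{1..n}. in_span n ?x ?y (x j) \<and> in_span n ?x ?y (y j)"
    by (metis fun_upd_other)
  show "symplectic_relations n ?x ?y"
    unfolding symplectic_relations_def using symplectic_basis_imp_relations[OF sb] i0 l0 \<open>i0 \<noteq> l0\<close>
    by (auto simp: inter_add_scaled_left inter_add_scaled_right symplectic_relations_inter)
qed

definition omega_sum :: "nat \<Rightarrow> (nat \<Rightarrow> complex) \<Rightarrow> (nat \<Rightarrow> nat \<Rightarrow> int) \<Rightarrow> (nat \<Rightarrow> nat \<Rightarrow> int) \<Rightarrow> real" where
  "omega_sum n c x y = (\<Sum>j\<in>{1..n}. Im (cnj (chi c n (x j)) * chi c n (y j)))"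

definition omega_basis :: "nat \<Rightarrow> (nat \<Rightarrow> complex) \<Rightarrow> (nat \<Rightarrow> nat \<Rightarrow> int) \<Rightarrow> (nat \<Rightarrow> nat \<Rightarrow> int) \<Rightarrow> bool" where
  "omega_basis n c x y \<longleftrightarrow> symplectic_basis n x y \<and> omega_sum n c x y = omega c n"

lemma omega_basis_shear_x:
  assumes "omega_basis n c x y" "j0 \<in> {1..n}"
  shows "omega_basis n c (x(j0 := add_scaled (x j0) k (y j0))) y"
proof -
  have "omega_sum n c (x(j0 := add_scaled (x j0) k (y j0))) y = omega_sum n c x y"
    unfolding omega_sum_def by (rule sum.cong) (auto simp: chi_add_scaled algebra_simps)
  then show ?thesis using assms symplectic_basis_shear_x unfolding omega_basis_def by metis
qed

lemma omega_basis_shear_y: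
  assumes "omega_basis n c x y" "j0 \<in> {1..n}"
  shows "omega_basis n c x (y(j0 := add_scaled (y j0) k (x j0)))"
proof -
  have "omega_sum n c x (y(j0 := add_scaled (y j0) k (x j0))) = omega_sum n c x y"
    unfolding omega_sum_def by (rule sum.cong) (auto simp: chi_add_scaled algebra_simps)
  then show ?thesis using assms symplectic_basis_shear_y unfolding omega_basis_def by metis
qed

lemma sum_transfer_between:
  assumes "finite S" "i \<in> S" "l \<in> S" "i \<noteq> l"
    and "\<And>j. j \<in> S \<Longrightarrow> j \<noteq> i \<Longrightarrow> j \<noteq> l \<Longrightarrow> g j = f j"
    and "g i = f i + d" "g l = f l - d"
  shows "sum g S = (sum f S :: 'a :: ab_group_add)"
proof -
  have "sum g S = sum (\<lambda>j. f j + ((if j = i then d else 0) + (if j = l then - d else 0))) S"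
    using assms by (intro sum.cong) auto
  also have "\<dots> = sum f S"
    using assms by (simp add: sum.distrib)
  finally show ?thesis .
qed

lemma omega_basis_cross:
  assumes "omega_basis n c x y" "i0 \<in> {1..n}" "l0 \<in> {1..n}" "i0 \<noteq> l0"
  shows "omega_basis n c (x(i0 := add_scaled (x i0) k (x l0))) (y(l0 := add_scaled (y l0) (- k) (y i0)))"
proof -
  have "omega_sum n c (x(i0 := add_scaled (x i0) k (x l0))) (y(l0 := add_scaled (y l0) (- k) (y i0)))
      = omega_sum n c x y"
    unfolding omega_sum_def
    by (rule sum_transfer_between[where i = i0 and l = l0 and d = "of_int k * Im (cnj (chi c n (x l0)) * chi c n (y i0))"])
       (use assms in \<open>auto simp: chi_add_scaled algebra_simps\<close>)
  then show ?thesis using assms symplectic_basis_cross unfolding omega_basis_def by metis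
qed

lemma euclidean_reduction_zero:
  fixes U W :: "'s \<Rightarrow> int"
  assumes add_to_U: "\<And>s k. P s \<Longrightarrow> \<exists>s'. P s' \<and> U s' = U s + k * W s \<and> W s' = W s"
    and add_to_W: "\<And>s k. P s \<Longrightarrow> \<exists>s'. P s' \<and> W s' = W s + k * U s \<and> U s' = U s"
  shows "P s \<Longrightarrow> \<exists>s'. P s' \<and> W s' = 0"
proof (induction "nat \<bar>W s\<bar>" arbitrary: s rule: less_induct)
  case less
  show ?case
  proof (cases "W s = 0")
    case True
    then show ?thesis using less.prems by blast
  next
    case False
    define a where "a = \<bar>W s\<bar>"
    have a: "a > 0" using False a_def by simp
    txt \<open>Move \<open>U\<close> into \<open>[1, |W|]\<close>; then \<open>W mod U\<close> is strictly smaller than \<open>|W|\<close>,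
      also when \<open>U = |W|\<close>.\<close>
    define r where "r = (U s - 1) mod a + 1"
    have r: "1 \<le> r" "r \<le> a"
      using pos_mod_bound[OF a, of "U s - 1"] pos_mod_sign[OF a, of "U s - 1"] unfolding r_def by linarith+
    have "r - U s = - a * ((U s - 1) div a)"
      unfolding r_def by (simp add: algebra_simps minus_div_mult_eq_mod[symmetric])
    then have "W s dvd (r - U s)" unfolding a_def by simp
    then obtain k where k: "r - U s = W s * k" by blast
    obtain s1 where s1: "P s1" "U s1 = U s + k * W s" "W s1 = W s"
      using add_to_U[OF less.prems] by blast
    have U1: "U s1 = r" using s1(2) k by (simp add: algebra_simps)
    obtain s2 where s2: "P s2" "W s2 = W s1 + (- (W s1 div r)) * U s1"
      using add_to_W[OF s1(1)] by blast
    have "W s2 = W s mod r" using s2(2) U1 s1(3) by (simp add: algebra_simps minus_div_mult_eq_mod[symmetric])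
    moreover have "0 \<le> W s mod r" "W s mod r < r" using r by simp_all
    ultimately have "nat \<bar>W s2\<bar> < nat \<bar>W s\<bar>" using r a_def False by linarith
    then show ?thesis using less.hyps s2(1) by blast
  qed
qed

lemma euclidean_reduction:
  fixes U W :: "'s \<Rightarrow> int"
  assumes add_to_U: "\<And>s k. P s \<Longrightarrow> \<exists>s'. P s' \<and> U s' = U s + k * W s \<and> W s' = W s"
    and add_to_W: "\<And>s k. P s \<Longrightarrow> \<exists>s'. P s' \<and> W s' = W s + k * U s \<and> U s' = U s"
    and "P s"
  shows "\<exists>s'. P s' \<and> W s' = 0 \<and> U s' \<ge> 0"
proof -
  obtain s1 where s1: "P s1" "W s1 = 0"
    using euclidean_reduction_zero[of P U W, OF add_to_U add_to_W \<open>P s\<close>] by blast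
  show ?thesis
  proof (cases "U s1 \<ge> 0")
    case True
    then show ?thesis using s1 by blast
  next
    case False
    txt \<open>Flip the sign of \<open>U\<close> by \<open>(U, 0) \<mapsto> (U, U) \<mapsto> (-U, U) \<mapsto> (-U, 0)\<close>.\<close>
    obtain s2 where s2: "P s2" "W s2 = U s1" "U s2 = U s1" using add_to_W[OF s1(1), of 1] s1(2) by auto
    obtain s3 where s3: "P s3" "U s3 = - U s1" "W s3 = U s1" using add_to_U[OF s2(1), of "-2"] s2 by auto
    obtain s4 where s4: "P s4" "W s4 = 0" "U s4 = - U s1" using add_to_W[OF s3(1), of 1] s3 by auto
    then show ?thesis using False by auto
  qed
qed

lemma omega_basis_reduce_handle:
  assumes "omega_basis n c x y" and j0: "j0 \<in> {1..n}" and L: "int_linear L" and M: "int_linear M"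
  shows "\<exists>x' y'. omega_basis n c x' y' \<and> L (y' j0) = 0 \<and> L (x' j0) \<ge> 0 \<and>
     (\<forall>m. m \<noteq> j0 \<longrightarrow> x' m = x m \<and> y' m = y m) \<and>
     (M (x j0) = 0 \<and> M (y j0) = 0 \<longrightarrow> M (x' j0) = 0 \<and> M (y' j0) = 0)"
proof -
  define P where "P s \<longleftrightarrow> omega_basis n c (fst s) (snd s) \<and>
     (\<forall>m. m \<noteq> j0 \<longrightarrow> fst s m = x m \<and> snd s m = y m) \<and>
     (M (x j0) = 0 \<and> M (y j0) = 0 \<longrightarrow> M (fst s j0) = 0 \<and> M (snd s j0) = 0)" for s
  have "\<exists>s'. P s' \<and> L (snd s' j0) = 0 \<and> L (fst s' j0) \<ge> 0"
  proof (rule euclidean_reduction[where U = "\<lambda>s. L (fst s j0)" and W = "\<lambda>s. L (snd s j0)"])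
    fix s k assume "P s"
    let ?s = "((fst s)(j0 := add_scaled (fst s j0) k (snd s j0)), snd s)"
    have "P ?s" using \<open>P s\<close> omega_basis_shear_x[OF _ j0]
      unfolding P_def by (auto simp: int_linear_add_scaled[OF M])
    then show "\<exists>s'. P s' \<and> L (fst s' j0) = L (fst s j0) + k * L (snd s j0) \<and> L (snd s' j0) = L (snd s j0)"
      by (intro exI[of _ ?s]) (simp add: int_linear_add_scaled[OF L])
  next
    fix s k assume "P s"
    let ?s = "(fst s, (snd s)(j0 := add_scaled (snd s j0) k (fst s j0)))"
    have "P ?s" using \<open>P s\<close> omega_basis_shear_y[OF _ j0]
      unfolding P_def by (auto simp: int_linear_add_scaled[OF M])
    then show "\<exists>s'. P s' \<and> L (snd s' j0) = L (snd s j0) + k * L (fst s j0) \<and> L (fst s' j0) = L (fst s j0)"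
      by (intro exI[of _ ?s]) (simp add: int_linear_add_scaled[OF L])
  next
    show "P (x, y)" using assms(1) unfolding P_def by simp
  qed
  then show ?thesis unfolding P_def by auto
qed

lemma omega_basis_reduce_across_handles:
  assumes "omega_basis n c x y" and i0: "i0 \<in> {1..n}" and j0: "j0 \<in> {1..n}" and "i0 \<noteq> j0"
    and L: "int_linear L" and "L (y i0) = 0" "L (y j0) = 0"
  shows "\<exists>x' y'. omega_basis n c x' y' \<and> L (x' j0) = 0 \<and> L (y' i0) = 0 \<and> L (y' j0) = 0 \<and>
     (\<forall>m. m \<noteq> i0 \<and> m \<noteq> j0 \<longrightarrow> x' m = x m \<and> y' m = y m)"
proof -
  define P where "P s \<longleftrightarrow> omega_basis n c (fst s) (snd s) \<and> L (snd s i0) = 0 \<and> L (snd s j0) = 0 \<and>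
      (\<forall>m. m \<noteq> i0 \<and> m \<noteq> j0 \<longrightarrow> fst s m = x m \<and> snd s m = y m)" for s
  have "\<exists>s'. P s' \<and> L (fst s' j0) = 0 \<and> L (fst s' i0) \<ge> 0"
  proof (rule euclidean_reduction[where U = "\<lambda>s. L (fst s i0)" and W = "\<lambda>s. L (fst s j0)"])
    fix s k assume "P s"
    let ?s = "((fst s)(i0 := add_scaled (fst s i0) k (fst s j0)), (snd s)(j0 := add_scaled (snd s j0) (- k) (snd s i0)))"
    have "P ?s" using \<open>P s\<close> omega_basis_cross[OF _ i0 j0 \<open>i0 \<noteq> j0\<close>] \<open>i0 \<noteq> j0\<close>
      unfolding P_def by (auto simp: int_linear_add_scaled[OF L])
    then show "\<exists>s'. P s' \<and> L (fst s' i0) = L (fst s i0) + k * L (fst s j0) \<and> L (fst s' j0) = L (fst s j0)"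
      using \<open>i0 \<noteq> j0\<close> by (intro exI[of _ ?s]) (simp add: int_linear_add_scaled[OF L])
  next
    fix s k assume "P s"
    let ?s = "((fst s)(j0 := add_scaled (fst s j0) k (fst s i0)), (snd s)(i0 := add_scaled (snd s i0) (- k) (snd s j0)))"
    have "P ?s" using \<open>P s\<close> omega_basis_cross[OF _ j0 i0] \<open>i0 \<noteq> j0\<close>
      unfolding P_def by (auto simp: int_linear_add_scaled[OF L])
    then show "\<exists>s'. P s' \<and> L (fst s' j0) = L (fst s j0) + k * L (fst s i0) \<and> L (fst s' i0) = L (fst s i0)"
      using \<open>i0 \<noteq> j0\<close> by (intro exI[of _ ?s]) (simp add: int_linear_add_scaled[OF L])
  next
    show "P (x, y)" using assms unfolding P_def by simp
  qed
  then show ?thesis unfolding P_def by auto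
qed

lemma omega_basis_form_vanishes_on_handles:
  assumes "omega_basis n c x y" "int_linear B" "1 \<le> n" "m \<le> n"
  shows "\<exists>x y. omega_basis n c x y \<and> B (y 1) = 0 \<and> (\<forall>j\<in>{2..m}. B (x j) = 0 \<and> B (y j) = 0)"
  using \<open>m \<le> n\<close>
proof (induction m)
  case 0
  show ?case using omega_basis_reduce_handle[OF assms(1) _ assms(2,2)] assms(3) by fastforce
next
  case (Suc m)
  obtain x y where xy: "omega_basis n c x y" "B (y 1) = 0" "\<forall>j\<in>{2..m}. B (x j) = 0 \<and> B (y j) = 0"
    using Suc by auto
  show ?case
  proof (cases "m = 0")
    case True
    then show ?thesis using xy by auto
  next
    case False
    have j0: "Suc m \<in> {1..n}" and "1 \<in> {1..n}" and "1 \<noteq> Suc m" using Suc.prems False by auto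
    obtain x1 y1 where x1: "omega_basis n c x1 y1" "B (y1 (Suc m)) = 0"
        "\<forall>i. i \<noteq> Suc m \<longrightarrow> x1 i = x i \<and> y1 i = y i"
      using omega_basis_reduce_handle[OF xy(1) j0 assms(2,2)] by blast
    have "B (y1 1) = 0" using x1(3) xy(2) \<open>1 \<noteq> Suc m\<close> by metis
    then obtain x2 y2 where x2: "omega_basis n c x2 y2" "B (x2 (Suc m)) = 0" "B (y2 1) = 0"
        "B (y2 (Suc m)) = 0" "\<forall>i. i \<noteq> 1 \<and> i \<noteq> Suc m \<longrightarrow> x2 i = x1 i \<and> y2 i = y1 i"
      using omega_basis_reduce_across_handles[OF x1(1) \<open>1 \<in> {1..n}\<close> j0 \<open>1 \<noteq> Suc m\<close> assms(2) _ x1(2)]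
      by blast
    have "B (x2 j) = 0 \<and> B (y2 j) = 0" if "j \<in> {2..Suc m}" for j
    proof (cases "j = Suc m")
      case False
      then have "j \<in> {2..m}" "j \<noteq> 1" using that by auto
      then show ?thesis using x2(5) x1(3) xy(3) False by metis
    qed (use x2 in simp)
    then show ?thesis using x2 by blast
  qed
qed

lemma omega_basis_normalize_handles:
  assumes "omega_basis n c x y" "int_linear A" "int_linear B"
    and "\<forall>j\<in>{2..n}. B (x j) = 0 \<and> B (y j) = 0" "m \<le> n"
  shows "\<exists>x y. omega_basis n c x y \<and> (\<forall>j\<in>{2..n}. B (x j) = 0 \<and> B (y j) = 0) \<and>
      (\<forall>j\<in>{2..m}. A (y j) = 0 \<and> A (x j) \<ge> 0)"
  using \<open>m \<le> n\<close>
proof (induction m)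
  case 0
  then show ?case using assms(1,4) by auto
next
  case (Suc m)
  obtain x y where xy: "omega_basis n c x y" "\<forall>j\<in>{2..n}. B (x j) = 0 \<and> B (y j) = 0"
      "\<forall>j\<in>{2..m}. A (y j) = 0 \<and> A (x j) \<ge> 0"
    using Suc by auto
  show ?case
  proof (cases "m = 0")
    case True
    then show ?thesis using xy by auto
  next
    case False
    have j0: "Suc m \<in> {1..n}" and j2: "Suc m \<in> {2..n}" using Suc.prems False by auto
    obtain x1 y1 where x1: "omega_basis n c x1 y1" "A (y1 (Suc m)) = 0" "A (x1 (Suc m)) \<ge> 0"
        "\<forall>i. i \<noteq> Suc m \<longrightarrow> x1 i = x i \<and> y1 i = y i"
        "B (x (Suc m)) = 0 \<and> B (y (Suc m)) = 0 \<longrightarrow> B (x1 (Suc m)) = 0 \<and> B (y1 (Suc m)) = 0"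
      using omega_basis_reduce_handle[OF xy(1) j0 assms(2,3)] by blast
    have "B (x1 (Suc m)) = 0 \<and> B (y1 (Suc m)) = 0" using x1(5) xy(2) j2 by blast
    then have "\<forall>j\<in>{2..n}. B (x1 j) = 0 \<and> B (y1 j) = 0"
      using x1(4) xy(2) by metis
    moreover have "A (y1 j) = 0 \<and> A (x1 j) \<ge> 0" if "j \<in> {2..Suc m}" for j
    proof (cases "j = Suc m")
      case False
      then show ?thesis using that x1(4) xy(3) by auto
    qed (use x1 in simp)
    ultimately show ?thesis using x1(1) by blast
  qed
qed

text \<open>Handles are numbered from 1, coordinates from 0.\<close>

definition std_x :: "nat \<Rightarrow> nat \<Rightarrow> int" where
  "std_x j = (\<lambda>t. of_bool (t = j - 1))"

definition std_y :: "nat \<Rightarrow> nat \<Rightarrow> nat \<Rightarrow> int" where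
  "std_y n j = (\<lambda>t. of_bool (t = n + j - 1))"

lemma symplectic_relations_std: "symplectic_relations n std_x (std_y n)"
  unfolding symplectic_relations_def
proof (intro ballI conjI)
  fix i j assume i: "i \<in> {1..n}" and j: "j \<in> {1..n}"
  have "inter n (std_x i) (std_y n j) = (\<Sum>t<n. of_bool (t = i - 1) * of_bool (t = j - 1))"
    unfolding inter_def std_x_def std_y_def using i j by (intro sum.cong) auto
  also have "\<dots> = (\<Sum>t<n. if t = i - 1 then of_bool (i - 1 = j - 1) else 0)"
    by (intro sum.cong) auto
  also have "\<dots> = of_bool (i = j)"
    using i j by auto
  finally show "inter n (std_x i) (std_y n j) = (if i = j then 1 else 0)"
    by simp
  show "inter n (std_x i) (std_x j) = 0" "inter n (std_y n i) (std_y n j) = 0"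
    unfolding inter_def std_x_def std_y_def using i j by (auto intro!: sum.neutral)
qed

lemma comb_std: "v \<in> H1 n \<Longrightarrow> v = comb n std_x (std_y n) (\<lambda>j. v (j - 1)) (\<lambda>j. v (n + j - 1))"
proof
  fix t assume "v \<in> H1 n"
  have "{1..n} \<inter> {j. t = j - 1} = (if t < n then {t + 1} else {})"
    and "{1..n} \<inter> {j. t = n + j - 1} = (if n \<le> t \<and> t < 2 * n then {t + 1 - n} else {})"
    by auto
  with \<open>v \<in> H1 n\<close> show "v t = comb n std_x (std_y n) (\<lambda>j. v (j - 1)) (\<lambda>j. v (n + j - 1)) t"
    unfolding comb_def std_x_def std_y_def H1_def
    by (simp only: sum.distrib sum_mult_of_bool_eq[OF finite_atLeastAtMost]) auto
qed

lemma symplectic_basis_std: "symplectic_basis n std_x (std_y n)"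
  unfolding symplectic_basis_def
proof (intro conjI)
  show "\<forall>j\<in>{1..n}. std_x j \<in> H1 n \<and> std_y n j \<in> H1 n"
    unfolding H1_def std_x_def std_y_def by auto
  show "\<forall>v\<in>H1 n. \<exists>a b. v = comb n std_x (std_y n) a b"
    using comb_std by blast
  show "\<forall>a b. comb n std_x (std_y n) a b = (\<lambda>_. 0) \<longrightarrow> (\<forall>j\<in>{1..n}. a j = 0 \<and> b j = 0)"
    using symplectic_relations_imp_independent[OF symplectic_relations_std] by blast
qed (use symplectic_relations_std in \<open>auto simp: symplectic_relations_def\<close>)

lemma omega_basis_std: "omega_basis n c std_x (std_y n)"
proof -
  have "chi c n (std_x j) = c (j - 1)" "chi c n (std_y n j) = c (n + j - 1)" if "j \<in> {1..n}" for j
    using that unfolding chi_def std_x_def std_y_def by (auto simp: Int_def)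
  then have "omega_sum n c std_x (std_y n) = (\<Sum>j\<in>{1..n}. Im (cnj (c (j - 1)) * c (n + j - 1)))"
    unfolding omega_sum_def by (intro sum.cong) auto
  also have "\<dots> = omega c n"
    unfolding omega_def by (simp add: sum.atLeast1_atMost_eq)
  finally show ?thesis
    unfolding omega_basis_def using symplectic_basis_std by simp
qed

lemma chi_Gaussian_decomposition:
  assumes "chi c n ` H1 n \<subseteq> gauss_ints"
  obtains A B where "int_linear A" "int_linear B" "\<And>v. chi c n v = of_int (A v) + \<i> * of_int (B v)"
proof -
  have gauss: "c k \<in> gauss_ints" if k: "k < 2 * n" for k
  proof -
    have e: "(\<lambda>t. of_bool (t = k)) \<in> H1 n"
      using k by (simp add: H1_def)
    have "{..<2 * n} \<inter> {t. t = k} = {k}"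
      using k by auto
    then have "chi c n (\<lambda>t. of_bool (t = k)) = c k"
      by (simp add: chi_def)
    moreover have "chi c n (\<lambda>t. of_bool (t = k)) \<in> gauss_ints"
      using assms e unfolding image_subset_iff by blast
    ultimately show ?thesis by simp
  qed
  have "\<forall>k. \<exists>pq. k < 2 * n \<longrightarrow> c k = of_int (fst pq) + \<i> * of_int (snd pq)"
  proof
    fix k
    show "\<exists>pq. k < 2 * n \<longrightarrow> c k = of_int (fst pq) + \<i> * of_int (snd pq)"
    proof (cases "k < 2 * n")
      case True
      then obtain a b where "c k = of_int a + \<i> * of_int b"
        using gauss unfolding gauss_ints_def by blast
      then show ?thesis by (intro exI[of _ "(a, b)"]) simp
    qed simp
  qed
  then obtain PQ where PQ: "\<forall>k. k < 2 * n \<longrightarrow> c k = of_int (fst (PQ k)) + \<i> * of_int (snd (PQ k))"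
    by (rule choice[THEN exE])
  let ?A = "\<lambda>v. \<Sum>t<2 * n. v t * fst (PQ t)" and ?B = "\<lambda>v. \<Sum>t<2 * n. v t * snd (PQ t)"
  have chi_eq: "chi c n v = of_int (?A v) + \<i> * of_int (?B v)" for v
  proof -
    have "chi c n v = (\<Sum>t<2 * n. of_int (v t * fst (PQ t)) + \<i> * of_int (v t * snd (PQ t)))"
      unfolding chi_def using PQ by (intro sum.cong) (auto simp: algebra_simps)
    then show ?thesis by (simp add: sum.distrib sum_distrib_left)
  qed
  from chi_eq show ?thesis by (rule that[OF int_linear_sum int_linear_sum])
qed

lemma omega_sum_first_handle:
  assumes "1 \<le> n" "\<forall>j\<in>{2..n}. chi c n (y j) = 0"
  shows "omega_sum n c x y = Im (cnj (chi c n (x 1)) * chi c n (y 1))"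
proof -
  have "{1..n} = insert 1 {2..n}" using assms(1) by auto
  then show ?thesis unfolding omega_sum_def using assms(2) by simp
qed

theorem mainTheorem13:
  fixes n :: nat and c :: "nat \<Rightarrow> complex"
  assumes "n \<ge> 2"
    and "chi c n ` H1 n = gauss_ints"
    and "omega c n > 0"
  shows "\<exists>x y. symplectic_basis n x y \<and>
           Im (cnj (chi c n (x 1)) * chi c n (y 1)) > 0 \<and>
           (\<forall>j\<in>{2..n}. chi c n (y j) = 0 \<and>
              chi c n (x j) \<in> \<real> \<and> Re (chi c n (x j)) \<ge> 0)"
proof -
  obtain A B where A: "int_linear A" and B: "int_linear B"
    and chi: "\<And>v. chi c n v = of_int (A v) + \<i> * of_int (B v)"
    using chi_Gaussian_decomposition assms(2) by blast
  have "1 \<le> n" using assms(1) by simp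
  obtain x0 y0 where "omega_basis n c x0 y0" "\<forall>j\<in>{2..n}. B (x0 j) = 0 \<and> B (y0 j) = 0"
    using omega_basis_form_vanishes_on_handles[OF omega_basis_std B \<open>1 \<le> n\<close> order_refl] by blast
  then obtain x y where xy: "omega_basis n c x y"
    and handles: "\<forall>j\<in>{2..n}. B (x j) = 0 \<and> B (y j) = 0 \<and> A (y j) = 0 \<and> A (x j) \<ge> 0"
    using omega_basis_normalize_handles[OF _ A B _ order_refl] by blast
  have y_zero: "\<forall>j\<in>{2..n}. chi c n (y j) = 0"
    using handles by (simp add: chi)
  have x_real: "\<forall>j\<in>{2..n}. chi c n (x j) \<in> \<real> \<and> Re (chi c n (x j)) \<ge> 0"
    using handles by (simp add: chi)
  have "Im (cnj (chi c n (x 1)) * chi c n (y 1)) = omega c n"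
    using xy omega_sum_first_handle[OF \<open>1 \<le> n\<close> y_zero] unfolding omega_basis_def by simp
  with xy y_zero x_real assms(3) show ?thesis
    unfolding omega_basis_def by (metis (no_types, lifting))
qed

end
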